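(* Let $K$ be a field, $f\colon R\to S$ a morphism of Zinbiel algebras, $N$ a positive integer, $\Theta_t=\sum_{i=0}^N\theta_it^i$ a deformation of order $N$ of $f$, and $\theta_{N+1}=(m_{R,N+1};m_{S,N+1};f_{N+1})\in C^2_{\mathrm{Zinb}}(f,f)$. Then $\widetilde{\Theta}_t:=\Theta_t+\theta_{N+1}t^{N+1}$ is a deformation of order $N+1$ of $f$ (an order $N+1$ extension of $\Theta_t$) if and only if $\mathrm{Ob}_\Theta=d^2_f\theta_{N+1}$.
   Context: A Zinbiel algebra over $K$ is a $K$-vector space $R$ with bilinear product $x\cdot y$ (also written $m_R(x,y)$) satisfying $(x\cdot y)\cdot z=x\cdot(y\cdot z)+x\cdot(z\cdot y)$. A morphism $f\colon R\to S$ is a linear map with $f(x\cdot y)=f(x)\cdot f(y)$. $R$ is a bimodule over itself, $S$ over itself, and $S$ is an $R$-bimodule via $r\cdot s=f(r)\cdot s$, $s\cdot r=s\cdot f(r)$. For a bimodule $A$ over $R$ and $1\le n\le4$, $C^n_{\mathrm{Zinb}}(R,A)=\mathrm{Hom}_K(R^{\otimes n},A)$ with $(d^1\varphi)(x,y)=x\cdot\varphi(y)-\varphi(x\cdot y)+\varphi(x)\cdot y$, $(d^2\varphi)(x,y,z)=x\cdot(\varphi(y,z)+\varphi(z,y))-\varphi(x\cdot y,z)+\varphi(x,y\cdot z+z\cdot y)-\varphi(x,y)\cdot z$, $(d^3\varphi)(x,y,z,w)=x\cdot\{\varphi(y,z,w)-\varphi(z,w,y)+\varphi(z,y,w)-\varphi(w,z,y)\}-\varphi(x\cdot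 y,z,w)+\varphi(x,y\cdot z+z\cdot y,w)-\varphi(x,y,z\cdot w+w\cdot z)+\varphi(x,y,z)\cdot w$. The deformation complex: $C^0_{\mathrm{Zinb}}(R,S)=0$, $d^0=0$, $C^n_{\mathrm{Zinb}}(f,f)=C^n_{\mathrm{Zinb}}(R,R)\times C^n_{\mathrm{Zinb}}(S,S)\times C^{n-1}_{\mathrm{Zinb}}(R,S)$ ($1\le n\le4$), $d^i_f(\xi;\pi;\varphi)=(d^i\xi;d^i\pi;f\xi-\pi f-d^{i-1}\varphi)$ with $(f\xi)(x_1,\dots)=f(\xi(x_1,\dots))$, $(\pi f)(x_1,\dots)=\pi(f(x_1),\dots)$. For a positive integer $M$, a deformation of order $M$ of $f$ is $\Theta_t=\sum_{i=0}^M\theta_it^i$ with $\theta_0=(m_R;m_S;f)$ (so $m_{R,0}=m_R$, $m_{S,0}=m_S$, $f_0=f$) and $\theta_i=(m_{R,i};m_{S,i};f_i)\in C^2_{\mathrm{Zinb}}(f,f)$, such that for all $0\le n\le M$: for $*=R,S$ and all $x,y,z\in *$, $\sum_{l=0}^n m_{*,l}(m_{*,n-l}(x,y),z)=\sum_{l=0}^n m_{*,l}(x,m_{*,n-l}(y,z)+m_{*,n-l}(z,y))$; and for all $x,y\in R$, $\sum_{i=0}^n f_i(m_{R,n-i}(x,y))=\sum_{i+j+k=n}m_{S,i}(f_j(x),f_k(y))$ (indices $\ge0$). The obstruction class of a deformation $\Theta_t$ of order $N$ is $\mathrm{Ob}_\Theta=(\mathrm{Ob}_R;\mathrm{Ob}_S;\mathrm{Ob}_f)\in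 C^3_{\mathrm{Zinb}}(f,f)$ where, for $*=R,S$ and $x,y,z\in *$, $\mathrm{Ob}_*(x,y,z)=\sum_{i=1}^N m_{*,i}(m_{*,N+1-i}(x,y),z)-\sum_{i=1}^N m_{*,i}(x,m_{*,N+1-i}(y,z)+m_{*,N+1-i}(z,y))$, and for $x,y\in R$, $\mathrm{Ob}_f(x,y)=\sum' m_{S,i}(f_j(x),f_k(y))-\sum_{i=1}^N f_i(m_{R,N+1-i}(x,y))$, where $\sum'$ runs over all triples of integers $i,j,k\ge0$ with $i+j+k=N+1$ and at least two of $i,j,k$ positive (equivalently, $i,j,k\le N$). *)

theory Defs
  imports Complex_Main
begin

text \<open>The underlying sets of R and S are the whole types 'r and 's.\<close>

definition bilinear_map ::
  "('k::field \<Rightarrow> 'a::ab_group_add \<Rightarrow> 'a) \<Rightarrow> ('k \<Rightarrow> 'b::ab_group_add \<Rightarrow> 'b) \<Rightarrow>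
   ('k \<Rightarrow> 'c::ab_group_add \<Rightarrow> 'c) \<Rightarrow> ('a \<Rightarrow> 'b \<Rightarrow> 'c) \<Rightarrow> bool" where
  "bilinear_map sA sB sC g \<longleftrightarrow>
     (\<forall>x. Vector_Spaces.linear sB sC (g x)) \<and> (\<forall>y. Vector_Spaces.linear sA sC (\<lambda>x. g x y))"

definition zinbiel_algebra :: "('k::field \<Rightarrow> 'a::ab_group_add \<Rightarrow> 'a) \<Rightarrow> ('a \<Rightarrow> 'a \<Rightarrow> 'a) \<Rightarrow> bool" where
  "zinbiel_algebra s m \<longleftrightarrow> vector_space s \<and> bilinear_map s s s m \<and>
     (\<forall>x y z. m (m x y) z = m x (m y z) + m x (m z y))"

definition zinbiel_morphism ::
  "('k::field \<Rightarrow> 'r::ab_group_add \<Rightarrow> 'r) \<Rightarrow> ('k \<Rightarrow> 's::ab_group_add \<Rightarrow> 's) \<Rightarrow>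
   ('r \<Rightarrow> 'r \<Rightarrow> 'r) \<Rightarrow> ('s \<Rightarrow> 's \<Rightarrow> 's) \<Rightarrow> ('r \<Rightarrow> 's) \<Rightarrow> bool" where
  "zinbiel_morphism sR sS mR mS f \<longleftrightarrow> zinbiel_algebra sR mR \<and> zinbiel_algebra sS mS \<and>
     Vector_Spaces.linear sR sS f \<and> (\<forall>x y. f (mR x y) = mS (f x) (f y))"

text \<open>Zinbiel coboundaries d^1, d^2 with coefficients in a bimodule M over an algebra (A, m),
  with left action l and right action r.\<close>

definition zd1 :: "('a::plus \<Rightarrow> 'a \<Rightarrow> 'a) \<Rightarrow> ('a \<Rightarrow> 'm \<Rightarrow> 'm) \<Rightarrow> ('m \<Rightarrow> 'a \<Rightarrow> 'm) \<Rightarrow>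
    ('a \<Rightarrow> 'm::ab_group_add) \<Rightarrow> 'a \<Rightarrow> 'a \<Rightarrow> 'm" where
  "zd1 m l r \<phi> x y = l x (\<phi> y) - \<phi> (m x y) + r (\<phi> x) y"

definition zd2 :: "('a::plus \<Rightarrow> 'a \<Rightarrow> 'a) \<Rightarrow> ('a \<Rightarrow> 'm \<Rightarrow> 'm) \<Rightarrow> ('m \<Rightarrow> 'a \<Rightarrow> 'm) \<Rightarrow>
    ('a \<Rightarrow> 'a \<Rightarrow> 'm::ab_group_add) \<Rightarrow> 'a \<Rightarrow> 'a \<Rightarrow> 'a \<Rightarrow> 'm" where
  "zd2 m l r \<phi> x y z = l x (\<phi> y z + \<phi> z y) - \<phi> (m x y) z + \<phi> x (m y z + m z y) - r (\<phi> x y) z"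

text \<open>The differential d^2_f of the deformation complex of f, on
  C^2(f,f) = C^2(R,R) x C^2(S,S) x C^1(R,S); S is an R-bimodule via f.\<close>

definition zinb_d2f ::
  "('r::ab_group_add \<Rightarrow> 'r \<Rightarrow> 'r) \<Rightarrow> ('s::ab_group_add \<Rightarrow> 's \<Rightarrow> 's) \<Rightarrow> ('r \<Rightarrow> 's) \<Rightarrow>
   ('r \<Rightarrow> 'r \<Rightarrow> 'r) \<times> ('s \<Rightarrow> 's \<Rightarrow> 's) \<times> ('r \<Rightarrow> 's) \<Rightarrow>
   ('r \<Rightarrow> 'r \<Rightarrow> 'r \<Rightarrow> 'r) \<times> ('s \<Rightarrow> 's \<Rightarrow> 's \<Rightarrow> 's) \<times> ('r \<Rightarrow> 'r \<Rightarrow> 's)" where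
  "zinb_d2f mR mS f \<theta> = (case \<theta> of (\<xi>, \<pi>, \<phi>) \<Rightarrow>
     (zd2 mR mR mR \<xi>,
      zd2 mS mS mS \<pi>,
      \<lambda>x y. f (\<xi> x y) - \<pi> (f x) (f y)
             - zd1 mR (\<lambda>a s. mS (f a) s) (\<lambda>s a. mS s (f a)) \<phi> x y))"

text \<open>Deformations of order M of f, given by the coefficient sequences
  ms_R i = m_{R,i}, ms_S i = m_{S,i}, fs i = f_i (only indices 0..M matter).\<close>

definition zinb_deformation ::
  "('k::field \<Rightarrow> 'r::ab_group_add \<Rightarrow> 'r) \<Rightarrow> ('k \<Rightarrow> 's::ab_group_add \<Rightarrow> 's) \<Rightarrow>
   ('r \<Rightarrow> 'r \<Rightarrow> 'r) \<Rightarrow> ('s \<Rightarrow> 's \<Rightarrow> 's) \<Rightarrow> ('r \<Rightarrow> 's) \<Rightarrow>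
   (nat \<Rightarrow> 'r \<Rightarrow> 'r \<Rightarrow> 'r) \<Rightarrow> (nat \<Rightarrow> 's \<Rightarrow> 's \<Rightarrow> 's) \<Rightarrow> (nat \<Rightarrow> 'r \<Rightarrow> 's) \<Rightarrow> nat \<Rightarrow> bool" where
  "zinb_deformation sR sS mR mS f msR msS fs M \<longleftrightarrow>
     0 < M \<and> msR 0 = mR \<and> msS 0 = mS \<and> fs 0 = f \<and>
     (\<forall>i\<in>{1..M}. bilinear_map sR sR sR (msR i) \<and> bilinear_map sS sS sS (msS i)
                 \<and> Vector_Spaces.linear sR sS (fs i)) \<and>
     (\<forall>n\<le>M.
        (\<forall>x y z. (\<Sum>l\<le>n. msR l (msR (n - l) x y) z)
                 = (\<Sum>l\<le>n. msR l x (msR (n - l) y z + msR (n - l) z y))) \<and>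
        (\<forall>x y z. (\<Sum>l\<le>n. msS l (msS (n - l) x y) z)
                 = (\<Sum>l\<le>n. msS l x (msS (n - l) y z + msS (n - l) z y))) \<and>
        (\<forall>x y. (\<Sum>i\<le>n. fs i (msR (n - i) x y))
               = (\<Sum>(i, j, k)\<in>{(i, j, k). i + j + k = n}. msS i (fs j x) (fs k y))))"

definition zinb_ob_alg :: "(nat \<Rightarrow> 'a \<Rightarrow> 'a \<Rightarrow> 'a::ab_group_add) \<Rightarrow> nat \<Rightarrow> 'a \<Rightarrow> 'a \<Rightarrow> 'a \<Rightarrow> 'a" where
  "zinb_ob_alg ms N x y z =
     (\<Sum>i\<in>{1..N}. ms i (ms (N + 1 - i) x y) z)
     - (\<Sum>i\<in>{1..N}. ms i x (ms (N + 1 - i) y z + ms (N + 1 - i) z y))"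

definition zinb_ob ::
  "(nat \<Rightarrow> 'r \<Rightarrow> 'r \<Rightarrow> 'r::ab_group_add) \<Rightarrow> (nat \<Rightarrow> 's \<Rightarrow> 's \<Rightarrow> 's::ab_group_add) \<Rightarrow> (nat \<Rightarrow> 'r \<Rightarrow> 's) \<Rightarrow> nat \<Rightarrow>
   ('r \<Rightarrow> 'r \<Rightarrow> 'r \<Rightarrow> 'r) \<times> ('s \<Rightarrow> 's \<Rightarrow> 's \<Rightarrow> 's) \<times> ('r \<Rightarrow> 'r \<Rightarrow> 's)" where
  "zinb_ob msR msS fs N =
     (zinb_ob_alg msR N,
      zinb_ob_alg msS N,
      \<lambda>x y. (\<Sum>(i, j, k)\<in>{(i, j, k). i + j + k = N + 1 \<and> i \<le> N \<and> j \<le> N \<and> k \<le> N}.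
                msS i (fs j x) (fs k y))
            - (\<Sum>i\<in>{1..N}. fs i (msR (N + 1 - i) x y)))"

end

theory Submission
  imports Defs
begin

text \<open>In the order-\<open>N+1\<close> equations of the extended deformation, \<open>\<theta>\<^sub>N\<^sub>+\<^sub>1\<close> occurs only in the
  terms where the other index is \<open>0\<close>; these terms form \<open>d\<^sup>2\<^sub>f \<theta>\<^sub>N\<^sub>+\<^sub>1\<close> (up to sign), and the
  remaining terms, all of index between \<open>1\<close> and \<open>N\<close>, form \<open>Ob\<^sub>\<Theta>\<close>. The equations of order at most
  \<open>N\<close> do not involve \<open>\<theta>\<^sub>N\<^sub>+\<^sub>1\<close> at all and hold because \<open>\<Theta>\<^sub>t\<close> is a deformation of order \<open>N\<close>.\<close>

lemma sum_atMost_Suc_ends: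
  fixes g :: "nat \<Rightarrow> 'a::comm_monoid_add"
  shows "(\<Sum>l\<le>Suc n. g l) = g 0 + (\<Sum>l\<in>{1..n}. g l) + g (Suc n)"
proof -
  have "{..Suc n} = insert 0 (insert (Suc n) {1..n})" by auto
  then show ?thesis by (simp add: algebra_simps)
qed

lemma sum_compositions3_Suc:
  fixes g :: "nat \<times> nat \<times> nat \<Rightarrow> 'a::comm_monoid_add"
  shows "(\<Sum>t\<in>{(i, j, k). i + j + k = Suc n}. g t)
     = g (Suc n, 0, 0) + g (0, Suc n, 0) + g (0, 0, Suc n)
       + (\<Sum>t\<in>{(i, j, k). i + j + k = Suc n \<and> i \<le> n \<and> j \<le> n \<and> k \<le> n}. g t)"
proof -
  let ?A = "{(i, j, k). i + j + k = Suc n \<and> i \<le> n \<and> j \<le> n \<and> k \<le> n}"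
  have "finite ?A"
    by (rule finite_subset[of _ "{..n} \<times> {..n} \<times> {..n}"]) auto
  moreover have "{(i, j, k). i + j + k = Suc n}
      = insert (Suc n, 0, 0) (insert (0, Suc n, 0) (insert (0, 0, Suc n) ?A))"
    by auto
  ultimately show ?thesis by (simp add: algebra_simps)
qed

definition zinb_identity_coeff :: "(nat \<Rightarrow> 'a \<Rightarrow> 'a \<Rightarrow> 'a::ab_group_add) \<Rightarrow> nat \<Rightarrow> bool" where
  "zinb_identity_coeff ms n \<longleftrightarrow>
     (\<forall>x y z. (\<Sum>l\<le>n. ms l (ms (n - l) x y) z)
              = (\<Sum>l\<le>n. ms l x (ms (n - l) y z + ms (n - l) z y)))"

definition zinb_morphism_coeff ::
  "(nat \<Rightarrow> 'r \<Rightarrow> 'r \<Rightarrow> 'r) \<Rightarrow> (nat \<Rightarrow> 's \<Rightarrow> 's \<Rightarrow> 's::ab_group_add) \<Rightarrow> (nat \<Rightarrow> 'r \<Rightarrow> 's) \<Rightarrow> nat \<Rightarrow> bool"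
  where
  "zinb_morphism_coeff msR msS fs n \<longleftrightarrow>
     (\<forall>x y. (\<Sum>i\<le>n. fs i (msR (n - i) x y))
            = (\<Sum>(i, j, k)\<in>{(i, j, k). i + j + k = n}. msS i (fs j x) (fs k y)))"

lemma zinb_deformation_iff:
  "zinb_deformation sR sS mR mS f msR msS fs M \<longleftrightarrow>
     0 < M \<and> msR 0 = mR \<and> msS 0 = mS \<and> fs 0 = f \<and>
     (\<forall>i\<in>{1..M}. bilinear_map sR sR sR (msR i) \<and> bilinear_map sS sS sS (msS i)
                 \<and> Vector_Spaces.linear sR sS (fs i)) \<and>
     (\<forall>n\<le>M. zinb_identity_coeff msR n \<and> zinb_identity_coeff msS n
             \<and> zinb_morphism_coeff msR msS fs n)"
  by (simp add: zinb_deformation_def zinb_identity_coeff_def zinb_morphism_coeff_def)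

lemma zinb_identity_coeff_fun_upd_above:
  assumes "n < k"
  shows "zinb_identity_coeff (ms(k := m)) n \<longleftrightarrow> zinb_identity_coeff ms n"
proof -
  have "(\<Sum>l\<le>n. (ms(k := m)) l ((ms(k := m)) (n - l) x y) z) = (\<Sum>l\<le>n. ms l (ms (n - l) x y) z)"
    and "(\<Sum>l\<le>n. (ms(k := m)) l x ((ms(k := m)) (n - l) y z + (ms(k := m)) (n - l) z y))
      = (\<Sum>l\<le>n. ms l x (ms (n - l) y z + ms (n - l) z y))" for x y z
    using assms by (auto intro!: sum.cong)
  then show ?thesis
    unfolding zinb_identity_coeff_def by simp
qed

lemma zinb_morphism_coeff_fun_upd_above:
  assumes "n < k"
  shows "zinb_morphism_coeff (msR(k := mR)) (msS(k := mS)) (fs(k := f)) n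
     \<longleftrightarrow> zinb_morphism_coeff msR msS fs n"
proof -
  have "(\<Sum>i\<le>n. (fs(k := f)) i ((msR(k := mR)) (n - i) x y)) = (\<Sum>i\<le>n. fs i (msR (n - i) x y))"
    and "(\<Sum>(i, j, l)\<in>{(i, j, l). i + j + l = n}. (msS(k := mS)) i ((fs(k := f)) j x) ((fs(k := f)) l y))
      = (\<Sum>(i, j, l)\<in>{(i, j, l). i + j + l = n}. msS i (fs j x) (fs l y))" for x y
    using assms by (auto intro!: sum.cong)
  then show ?thesis
    unfolding zinb_morphism_coeff_def by simp
qed

lemma zinb_deformation_fun_upd_iff:
  assumes "zinb_deformation sR sS mR mS f msR msS fs N"
    and "bilinear_map sR sR sR mRN" "bilinear_map sS sS sS mSN" "Vector_Spaces.linear sR sS fN"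
  shows "zinb_deformation sR sS mR mS f
           (msR(Suc N := mRN)) (msS(Suc N := mSN)) (fs(Suc N := fN)) (Suc N)
     \<longleftrightarrow> zinb_identity_coeff (msR(Suc N := mRN)) (Suc N)
         \<and> zinb_identity_coeff (msS(Suc N := mSN)) (Suc N)
         \<and> zinb_morphism_coeff (msR(Suc N := mRN)) (msS(Suc N := mSN)) (fs(Suc N := fN)) (Suc N)"
proof -
  have lower: "zinb_identity_coeff (msR(Suc N := mRN)) n \<and> zinb_identity_coeff (msS(Suc N := mSN)) n
      \<and> zinb_morphism_coeff (msR(Suc N := mRN)) (msS(Suc N := mSN)) (fs(Suc N := fN)) n"
    if "n \<le> N" for n
  proof -
    have "zinb_identity_coeff msR n \<and> zinb_identity_coeff msS n \<and> zinb_morphism_coeff msR msS fs n"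
      using assms(1) that by (simp add: zinb_deformation_iff)
    then show ?thesis
      using that by (simp add: zinb_identity_coeff_fun_upd_above zinb_morphism_coeff_fun_upd_above)
  qed
  have "(\<forall>n\<le>Suc N. P n) \<longleftrightarrow> P (Suc N)" if "\<And>n. n \<le> N \<Longrightarrow> P n" for P
    using that le_Suc_eq by auto
  with lower show ?thesis
    using assms by (auto simp: zinb_deformation_iff)
qed

lemma zinb_identity_coeff_fun_upd_iff:
  fixes ms :: "nat \<Rightarrow> 'a \<Rightarrow> 'a \<Rightarrow> 'a::ab_group_add"
  assumes "ms 0 = m"
  shows "zinb_identity_coeff (ms(Suc N := mN)) (Suc N) \<longleftrightarrow> zinb_ob_alg ms N = zd2 m m m mN"
proof -
  let ?ms' = "ms(Suc N := mN)"
  have "(\<Sum>l\<in>{1..N}. ?ms' l (?ms' (Suc N - l) x y) z) = (\<Sum>l\<in>{1..N}. ms l (ms (Suc N - l) x y) z)"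
    and "(\<Sum>l\<in>{1..N}. ?ms' l x (?ms' (Suc N - l) y z + ?ms' (Suc N - l) z y))
      = (\<Sum>l\<in>{1..N}. ms l x (ms (Suc N - l) y z + ms (Suc N - l) z y))" for x y z
    by (auto intro!: sum.cong)
  then have "(\<Sum>l\<le>Suc N. ?ms' l (?ms' (Suc N - l) x y) z)
      = m (mN x y) z + (\<Sum>l\<in>{1..N}. ms l (ms (Suc N - l) x y) z) + mN (m x y) z"
    and "(\<Sum>l\<le>Suc N. ?ms' l x (?ms' (Suc N - l) y z + ?ms' (Suc N - l) z y))
      = m x (mN y z + mN z y) + (\<Sum>l\<in>{1..N}. ms l x (ms (Suc N - l) y z + ms (Suc N - l) z y))
        + mN x (m y z + m z y)" for x y z
    using assms by (simp_all only: sum_atMost_Suc_ends) simp_all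
  then show ?thesis
    unfolding zinb_identity_coeff_def zinb_ob_alg_def zd2_def fun_eq_iff
    by (simp add: algebra_simps)
qed

lemma zinb_morphism_coeff_fun_upd_iff:
  assumes "msR 0 = mR" "msS 0 = mS" "fs 0 = f"
  shows "zinb_morphism_coeff (msR(Suc N := mRN)) (msS(Suc N := mSN)) (fs(Suc N := fN)) (Suc N)
     \<longleftrightarrow> snd (snd (zinb_ob msR msS fs N)) = snd (snd (zinb_d2f mR mS f (mRN, mSN, fN)))"
proof -
  let ?msR' = "msR(Suc N := mRN)" and ?msS' = "msS(Suc N := mSN)" and ?fs' = "fs(Suc N := fN)"
  let ?inner = "{(i, j, k). i + j + k = Suc N \<and> i \<le> N \<and> j \<le> N \<and> k \<le> N}"
  have "(\<Sum>i\<in>{1..N}. ?fs' i (?msR' (Suc N - i) x y)) = (\<Sum>i\<in>{1..N}. fs i (msR (Suc N - i) x y))"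
    and "(\<Sum>(i, j, k)\<in>?inner. ?msS' i (?fs' j x) (?fs' k y))
      = (\<Sum>(i, j, k)\<in>?inner. msS i (fs j x) (fs k y))" for x y
    by (auto intro!: sum.cong)
  then have "(\<Sum>i\<le>Suc N. ?fs' i (?msR' (Suc N - i) x y))
      = f (mRN x y) + (\<Sum>i\<in>{1..N}. fs i (msR (Suc N - i) x y)) + fN (mR x y)"
    and "(\<Sum>(i, j, k)\<in>{(i, j, k). i + j + k = Suc N}. ?msS' i (?fs' j x) (?fs' k y))
      = mSN (f x) (f y) + mS (fN x) (f y) + mS (f x) (fN y)
        + (\<Sum>(i, j, k)\<in>?inner. msS i (fs j x) (fs k y))" for x y
    using assms
    by (simp_all only: sum_atMost_Suc_ends sum_compositions3_Suc) (simp_all add: algebra_simps)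
  then show ?thesis
    unfolding zinb_morphism_coeff_def zinb_ob_def zinb_d2f_def zd1_def fun_eq_iff
    by (simp add: algebra_simps) (simp only: eq_commute)
qed

theorem theorem5p2:
  fixes sR :: "'k::field \<Rightarrow> 'r::ab_group_add \<Rightarrow> 'r"
    and sS :: "'k \<Rightarrow> 's::ab_group_add \<Rightarrow> 's"
    and mR :: "'r \<Rightarrow> 'r \<Rightarrow> 'r" and mS :: "'s \<Rightarrow> 's \<Rightarrow> 's" and f :: "'r \<Rightarrow> 's"
    and msR :: "nat \<Rightarrow> 'r \<Rightarrow> 'r \<Rightarrow> 'r" and msS :: "nat \<Rightarrow> 's \<Rightarrow> 's \<Rightarrow> 's"
    and fs :: "nat \<Rightarrow> 'r \<Rightarrow> 's"
    and mRN :: "'r \<Rightarrow> 'r \<Rightarrow> 'r" and mSN :: "'s \<Rightarrow> 's \<Rightarrow> 's" and fN :: "'r \<Rightarrow> 's"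
    and N :: nat
  assumes "zinbiel_morphism sR sS mR mS f"
    and "0 < N"
    and "zinb_deformation sR sS mR mS f msR msS fs N"
    and "bilinear_map sR sR sR mRN" and "bilinear_map sS sS sS mSN"
    and "Vector_Spaces.linear sR sS fN"
  shows "zinb_deformation sR sS mR mS f
           (\<lambda>i. if i = N + 1 then mRN else msR i)
           (\<lambda>i. if i = N + 1 then mSN else msS i)
           (\<lambda>i. if i = N + 1 then fN else fs i) (N + 1)
         \<longleftrightarrow> zinb_ob msR msS fs N = zinb_d2f mR mS f (mRN, mSN, fN)"
proof -
  have base: "msR 0 = mR" "msS 0 = mS" "fs 0 = f"
    using assms(3) by (simp_all add: zinb_deformation_iff)
  have "zinb_deformation sR sS mR mS f
          (msR(N + 1 := mRN)) (msS(N + 1 := mSN)) (fs(N + 1 := fN)) (N + 1)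
     \<longleftrightarrow> zinb_ob_alg msR N = zd2 mR mR mR mRN \<and> zinb_ob_alg msS N = zd2 mS mS mS mSN
         \<and> snd (snd (zinb_ob msR msS fs N)) = snd (snd (zinb_d2f mR mS f (mRN, mSN, fN)))"
    using base assms(3-6)
    by (simp add: zinb_deformation_fun_upd_iff zinb_identity_coeff_fun_upd_iff zinb_morphism_coeff_fun_upd_iff)
  also have "\<dots> \<longleftrightarrow> zinb_ob msR msS fs N = zinb_d2f mR mS f (mRN, mSN, fN)"
    by (simp add: prod_eq_iff zinb_ob_def zinb_d2f_def)
  finally show ?thesis
    by (simp add: fun_upd_def)
qed

end
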